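(* Let $F:\mathbb{R}^d\to\mathbb{R}$ be strongly convex with convexity parameter $\tau>0$ and belong to $C^{1,1}(\mathbb{R}^d)$ with gradient-Lipschitz constant $L>0$, and let $\boldsymbol x^*$ be its global minimizer. Fix $M\ge1$ and $0<\sigma<1$, and let $C>0$ be a constant such that for every $\boldsymbol x\in\mathbb{R}^d$ and every unit vector $\boldsymbol\xi\in\mathbb{R}^d$, $$\big|\widetilde{\mathscr{D}}^M[G_\sigma(0\,|\,\boldsymbol x,\boldsymbol\xi)]-\mathscr{D}[G_\sigma(0\,|\,\boldsymbol x,\boldsymbol\xi)]\big|\le C\,\frac{M!\,\sqrt{\pi}}{2^M\,(2M)!}\,\sigma^{2M-1}.$$ Let $\boldsymbol x_0\in\mathbb{R}^d$ and define $\boldsymbol x_{t+1}=\boldsymbol x_t-\lambda\,\widetilde{\nabla}^M_{\sigma,\boldsymbol\Xi_t}[F](\boldsymbol x_t)$ for $t\ge0$, with $\lambda=1/(8L)$ and where each $\boldsymbol\Xi_t$ is an (arbitrary) orthonormal basis of $\mathbb{R}^d$. Then for every $t\ge0$, $$F(\boldsymbol x_t)-F(\boldsymbol x^* )\le\frac12 L\Big[\delta_\sigma+\Big(1-\frac{\tau}{16L}\Big)^t\big(\|\boldsymbol x_0-\boldsymbol x^*\|^2-\delta_\sigma\big)\Big],$$ where $$\delta_\sigma=\Big(\frac{128}{\tau^2}+\frac{16}{\tau L}\Big)L^2 d\,\sigma^2+\Big(\frac{8}{\tau^2}+\frac{1}{2\tau L}\Big)\frac{C^2(M!)^2\pi d}{4^M((2M)!)^2}\,\sigma^2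 .$$
   Context: $F\in C^{1,1}(\mathbb{R}^d)$ means there is $L>0$ with $\|\nabla F(\boldsymbol x+\boldsymbol\xi)-\nabla F(\boldsymbol x)\|\le L\|\boldsymbol\xi\|$ for all $\boldsymbol x,\boldsymbol\xi$; $\|\cdot\|$ is the Euclidean norm. $F$ is strongly convex with parameter $\tau>0$ if $F(\boldsymbol x+\boldsymbol\xi)\ge F(\boldsymbol x)+\langle\nabla F(\boldsymbol x),\boldsymbol\xi\rangle+\frac\tau2\|\boldsymbol\xi\|^2$ for all $\boldsymbol x,\boldsymbol\xi$. For $\boldsymbol x\in\mathbb{R}^d$ and a unit vector $\boldsymbol\xi$, set $G(y\,|\,\boldsymbol x,\boldsymbol\xi)=F(\boldsymbol x+y\boldsymbol\xi)$ for $y\in\mathbb{R}$, and $G_\sigma(y\,|\,\boldsymbol x,\boldsymbol\xi)=\mathbb{E}_{v\sim\mathcal N(0,1)}[G(y+\sigma v\,|\,\boldsymbol x,\boldsymbol\xi)]$. Its derivative at $0$ is $\mathscr{D}[G_\sigma(0\,|\,\boldsymbol x,\boldsymbol\xi)]=\frac1\sigma\mathbb{E}_{v\sim\mathcal N(0,1)}[G(\sigma v\,|\,\boldsymbol x,\boldsymbol\xi)\,v]$. The Gauss–Hermite estimator is $\widetilde{\mathscr{D}}^M[G_\sigma(0\,|\,\boldsymbol x,\boldsymbol\xi)]=\frac{1}{\sqrt\pi\,\sigma}\sum_{m=1}^M w_m F(\boldsymbol x+\sqrt2\sigma v_m\boldsymbol\xi)\sqrt2 v_m$, where $v_1,\ldots,v_M$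 are the roots of the $M$-th Hermite polynomial $H_M$ (physicists' convention, weight $e^{-v^2}$) and $w_m$ the corresponding Gauss–Hermite quadrature weights. For an orthonormal basis $\boldsymbol\Xi=(\boldsymbol\xi_1,\ldots,\boldsymbol\xi_d)$, the DGS estimator is $\widetilde{\nabla}^M_{\sigma,\boldsymbol\Xi}[F](\boldsymbol x)=\sum_{i=1}^d\widetilde{\mathscr{D}}^M[G_\sigma(0\,|\,\boldsymbol x,\boldsymbol\xi_i)]\,\boldsymbol\xi_i$. *)

theory Defs
  imports "HOL-Probability.Probability"
begin

text \<open>Physicists' Hermite polynomials (weight exp(-v^2)).\<close>
fun hermite :: "nat \<Rightarrow> real \<Rightarrow> real" where
  "hermite 0 x = 1"
| "hermite (Suc 0) x = 2 * x"
| "hermite (Suc (Suc n)) x = 2 * x * hermite (Suc n) x - 2 * real (Suc n) * hermite n x"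

definition gh_nodes :: "nat \<Rightarrow> real set" where
  "gh_nodes M = {v. hermite M v = 0}"

definition gh_weight :: "nat \<Rightarrow> real \<Rightarrow> real" where
  "gh_weight M v = (LINT x|lborel. (\<Prod>u\<in>gh_nodes M - {v}. (x - u) / (v - u)) * exp (- x\<^sup>2))"

text \<open>Derivative at 0 of the Gaussian-smoothed 1D restriction G_sigma(. | x, xi).\<close>
definition smoothed_dir_deriv :: "('a::euclidean_space \<Rightarrow> real) \<Rightarrow> real \<Rightarrow> 'a \<Rightarrow> 'a \<Rightarrow> real" where
  "smoothed_dir_deriv F \<sigma> x \<xi> =
     (1 / \<sigma>) * (LINT v|lborel. std_normal_density v * (F (x + (\<sigma> * v) *\<^sub>R \<xi>) * v))"

definition gh_dir_deriv :: "('a::euclidean_space \<Rightarrow> real) \<Rightarrow> nat \<Rightarrow> real \<Rightarrow> 'a \<Rightarrow> 'a \<Rightarrow> real" where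
  "gh_dir_deriv F M \<sigma> x \<xi> =
     (1 / (sqrt pi * \<sigma>)) *
       (\<Sum>v\<in>gh_nodes M. gh_weight M v * F (x + (sqrt 2 * \<sigma> * v) *\<^sub>R \<xi>) * (sqrt 2 * v))"

definition orthonormal_basis :: "(nat \<Rightarrow> 'a::euclidean_space) \<Rightarrow> bool" where
  "orthonormal_basis \<Xi> \<longleftrightarrow>
     (\<forall>i<DIM('a). \<forall>j<DIM('a). \<Xi> i \<bullet> \<Xi> j = (if i = j then 1 else 0))"

definition dgs_grad :: "('a::euclidean_space \<Rightarrow> real) \<Rightarrow> nat \<Rightarrow> real \<Rightarrow> (nat \<Rightarrow> 'a) \<Rightarrow> 'a \<Rightarrow> 'a" where
  "dgs_grad F M \<sigma> \<Xi> x = (\<Sum>i<DIM('a). gh_dir_deriv F M \<sigma> x (\<Xi> i) *\<^sub>R \<Xi> i)"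

end

theory Submission
  imports Defs
begin

text \<open>
  Because the gradient is \<open>L\<close>-Lipschitz, the second-order Taylor remainder of \<open>F\<close> along a
  unit direction is at most \<open>L v\<^sup>2/2\<close>; averaging it against the Gaussian moments shows that the
  smoothed directional derivative differs from the true one by at most \<open>L\<sigma>\<close>. Adding the
  quadrature error and summing squares over an orthonormal basis bounds the error of the DGS
  estimator by a constant \<open>E = O(d\<sigma>\<^sup>2)\<close>. A gradient step with an error of size \<open>E\<close> on an
  \<open>L\<close>-smooth, \<open>\<tau>\<close>-strongly convex function contracts \<open>\<parallel>x\<^sub>t - x\<^sup>*\<parallel>\<^sup>2\<close> by the factor
  \<open>1 - \<tau>/(16L)\<close> up to an additive \<open>O(E)\<close>; unrolling this affine recursion and using
  \<open>F x - F x\<^sup>* \<le> L/2 \<parallel>x - x\<^sup>*\<parallel>\<^sup>2\<close> gives the bound.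
\<close>

lemma orthonormal_basis_expansion:
  fixes \<Xi> :: "nat \<Rightarrow> 'a::euclidean_space"
  assumes "orthonormal_basis \<Xi>"
  shows "g = (\<Sum>i<DIM('a). (g \<bullet> \<Xi> i) *\<^sub>R \<Xi> i)"
proof -
  let ?S = "\<Xi> ` {..<DIM('a)}"
  have ij: "\<And>i j. i < DIM('a) \<Longrightarrow> j < DIM('a) \<Longrightarrow> \<Xi> i \<bullet> \<Xi> j = (if i = j then 1 else 0)"
    using assms unfolding orthonormal_basis_def by blast
  have "inj_on \<Xi> {..<DIM('a)}"
    unfolding inj_on_def using ij by (metis lessThan_iff zero_neq_one)
  then have card: "card ?S = DIM('a)" by (simp add: card_image)
  have "pairwise orthogonal ?S"
    unfolding pairwise_def orthogonal_def using ij by auto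
  moreover have "0 \<notin> ?S" using ij by fastforce
  ultimately have "independent ?S" by (rule pairwise_orthogonal_independent)
  then have spans: "UNIV \<subseteq> span ?S"
    by (intro card_ge_dim_independent) (auto simp: card)
  define w where "w = g - (\<Sum>i<DIM('a). (g \<bullet> \<Xi> i) *\<^sub>R \<Xi> i)"
  have "w \<bullet> \<Xi> j = 0" if j: "j < DIM('a)" for j
  proof -
    have "(\<Sum>i<DIM('a). (g \<bullet> \<Xi> i) *\<^sub>R \<Xi> i) \<bullet> \<Xi> j = (\<Sum>i<DIM('a). (g \<bullet> \<Xi> i) * (\<Xi> i \<bullet> \<Xi> j))"
      by (simp add: inner_sum_left)
    also have "\<dots> = (\<Sum>i<DIM('a). if i = j then g \<bullet> \<Xi> j else 0)"
      by (rule sum.cong) (auto simp: ij j)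
    also have "\<dots> = g \<bullet> \<Xi> j" using j by simp
    finally show ?thesis unfolding w_def by (simp add: inner_diff_left)
  qed
  then have "orthogonal w w"
    using orthogonal_to_span spans unfolding orthogonal_def by blast
  then show ?thesis unfolding w_def by (simp add: orthogonal_def)
qed

lemma norm_sum_orthonormal_basis_squared:
  fixes \<Xi> :: "nat \<Rightarrow> 'a::euclidean_space"
  assumes "orthonormal_basis \<Xi>"
  shows "(norm (\<Sum>i<DIM('a). c i *\<^sub>R \<Xi> i))\<^sup>2 = (\<Sum>i<DIM('a). (c i)\<^sup>2)"
proof -
  have ij: "\<And>i j. i < DIM('a) \<Longrightarrow> j < DIM('a) \<Longrightarrow> \<Xi> i \<bullet> \<Xi> j = (if i = j then 1 else 0)"
    using assms unfolding orthonormal_basis_def by blast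
  have "(norm (\<Sum>i<DIM('a). c i *\<^sub>R \<Xi> i))\<^sup>2
      = (\<Sum>i<DIM('a). \<Sum>j<DIM('a). c i * (c j * (\<Xi> j \<bullet> \<Xi> i)))"
    by (simp add: power2_norm_eq_inner inner_sum_left inner_sum_right sum_distrib_left)
  also have "\<dots> = (\<Sum>i<DIM('a). \<Sum>j<DIM('a). if j = i then (c i)\<^sup>2 else 0)"
    by (intro sum.cong refl) (auto simp: ij power2_eq_square)
  also have "\<dots> = (\<Sum>i<DIM('a). (c i)\<^sup>2)" by simp
  finally show ?thesis .
qed

lemma lipschitz_gradient_upper_bound:
  fixes F :: "'a::real_inner \<Rightarrow> real"
  assumes grad: "\<And>y. (F has_derivative (\<lambda>h. gradF y \<bullet> h)) (at y)"
    and lipschitz: "\<And>y \<xi>. norm (gradF (y + \<xi>) - gradF y) \<le> L * norm \<xi>"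
  shows "F (y + h) \<le> F y + gradF y \<bullet> h + L / 2 * (norm h)\<^sup>2"
proof -
  define \<phi> where "\<phi> s = F (y + s *\<^sub>R h) - s * (gradF y \<bullet> h) - L/2 * s\<^sup>2 * (norm h)\<^sup>2" for s :: real
  have deriv: "DERIV \<phi> s :> (gradF (y + s *\<^sub>R h) - gradF y) \<bullet> h - L * s * (norm h)\<^sup>2" for s
  proof -
    have "((\<lambda>s. y + s *\<^sub>R h) has_derivative (\<lambda>t. t *\<^sub>R h)) (at s)"
      by (auto intro!: derivative_eq_intros)
    from has_derivative_compose[OF this grad]
    have "((\<lambda>s. F (y + s *\<^sub>R h)) has_real_derivative (gradF (y + s *\<^sub>R h) \<bullet> h)) (at s)"
      by (simp add: has_field_derivative_def inner_scaleR_right mult_commute_abs)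
    then show ?thesis unfolding \<phi>_def
      by (auto intro!: derivative_eq_intros simp: inner_diff_left)
  qed
  have "\<phi> 1 \<le> \<phi> 0"
  proof (rule DERIV_nonpos_imp_nonincreasing[where f=\<phi>])
    fix s :: real assume s: "0 \<le> s" "s \<le> 1"
    have "(gradF (y + s *\<^sub>R h) - gradF y) \<bullet> h \<le> norm (gradF (y + s *\<^sub>R h) - gradF y) * norm h"
      by (rule norm_cauchy_schwarz)
    also have "\<dots> \<le> L * norm (s *\<^sub>R h) * norm h"
      by (rule mult_right_mono[OF lipschitz]) simp
    also have "\<dots> = L * s * (norm h)\<^sup>2" using s by (simp add: power2_eq_square)
    finally show "\<exists>y. DERIV \<phi> s :> y \<and> y \<le> 0" using deriv by fastforce
  qed simp
  then show ?thesis unfolding \<phi>_def by simp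
qed

lemma lipschitz_gradient_taylor_bound:
  fixes F :: "'a::real_inner \<Rightarrow> real"
  assumes grad: "\<And>y. (F has_derivative (\<lambda>h. gradF y \<bullet> h)) (at y)"
    and lipschitz: "\<And>y \<xi>. norm (gradF (y + \<xi>) - gradF y) \<le> L * norm \<xi>"
  shows "\<bar>F (y + h) - F y - gradF y \<bullet> h\<bar> \<le> L / 2 * (norm h)\<^sup>2"
proof -
  have grad_neg: "((\<lambda>x. - F x) has_derivative (\<lambda>h. - gradF y \<bullet> h)) (at y)" for y
    using has_derivative_minus[OF grad[of y]] by simp
  have lipschitz_neg: "norm (- gradF (y + \<xi>) - - gradF y) \<le> L * norm \<xi>" for y \<xi>
    using lipschitz[of y \<xi>] by (simp add: norm_minus_commute)
  show ?thesis
    using lipschitz_gradient_upper_bound[OF grad lipschitz, of y h]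
      lipschitz_gradient_upper_bound[OF grad_neg lipschitz_neg, of y h]
    unfolding abs_le_iff inner_minus_left by linarith
qed

lemma std_normal_moment_bound_quadratic:
  fixes R :: "real \<Rightarrow> real"
  assumes R_meas: "R \<in> borel_measurable lborel"
    and R_bound: "\<And>v. \<bar>R v\<bar> \<le> K * v\<^sup>2"
  shows "integrable lborel (\<lambda>v. std_normal_density v * (R v * v))"
    and "\<bar>LINT v|lborel. std_normal_density v * (R v * v)\<bar> \<le> 2 * K"
proof -
  let ?s = std_normal_density
  define B where "B v = K / 2 * (?s v * v\<^sup>2 + ?s v * v ^ 4)" for v
  have B_int: "integrable lborel B"
    unfolding B_def by (simp add: integrable_std_normal_moment)
  have "integral\<^sup>L lborel B = K / 2 * (1 + 3)"
    using integral_std_normal_moment_even[of 1] integral_std_normal_moment_even[of 2]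
    unfolding B_def by (simp add: integrable_std_normal_moment fact_numeral)
  then have B_integral: "integral\<^sup>L lborel B = 2 * K" by simp
  have pointwise: "\<bar>?s v * (R v * v)\<bar> \<le> B v" for v
  proof -
    have K_nonneg: "0 \<le> K" using order_trans[OF abs_ge_zero R_bound[of 1]] by simp
    \<comment> \<open>\<open>|v|\<^sup>3 \<le> (v\<^sup>2 + v\<^sup>4) / 2\<close> replaces the third absolute moment by even ones.\<close>
    have "(\<bar>v\<bar> * (1 - \<bar>v\<bar>))\<^sup>2 = v\<^sup>2 + v ^ 4 - 2 * \<bar>v\<bar> ^ 3"
      by (simp add: power2_eq_square power3_eq_cube power4_eq_xxxx algebra_simps)
    then have cube: "2 * \<bar>v\<bar> ^ 3 \<le> v\<^sup>2 + v ^ 4"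
      using zero_le_power2[of "\<bar>v\<bar> * (1 - \<bar>v\<bar>)"] by linarith
    have "v\<^sup>2 * \<bar>v\<bar> = \<bar>v\<bar> ^ 3"
      by (simp add: power2_eq_square power3_eq_cube abs_mult_self_eq mult.assoc[symmetric])
    then have "\<bar>R v * v\<bar> \<le> K / 2 * (2 * \<bar>v\<bar> ^ 3)"
      using mult_right_mono[OF R_bound abs_ge_zero, of v v] by (simp add: abs_mult mult.assoc)
    also have "\<dots> \<le> K / 2 * (v\<^sup>2 + v ^ 4)"
      using cube K_nonneg by (intro mult_left_mono) auto
    finally have "?s v * \<bar>R v * v\<bar> \<le> ?s v * (K / 2 * (v\<^sup>2 + v ^ 4))"
      by (rule mult_left_mono) simp
    then show ?thesis
      unfolding B_def by (simp add: abs_mult algebra_simps)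
  qed
  show R_int: "integrable lborel (\<lambda>v. ?s v * (R v * v))"
  proof (rule Bochner_Integration.integrable_bound[OF B_int])
    show "(\<lambda>v. ?s v * (R v * v)) \<in> borel_measurable lborel"
      using R_meas by measurable
    show "AE v in lborel. norm (?s v * (R v * v)) \<le> norm (B v)"
      using pointwise by (auto intro: order_trans[OF _ abs_ge_self])
  qed
  show "\<bar>LINT v|lborel. ?s v * (R v * v)\<bar> \<le> 2 * K"
    using Bochner_Integration.integral_norm_bound_integral[OF R_int B_int] pointwise B_integral by simp
qed

lemma smoothed_dir_deriv_approx:
  fixes F :: "'a::euclidean_space \<Rightarrow> real"
  assumes grad: "\<And>y. (F has_derivative (\<lambda>h. gradF y \<bullet> h)) (at y)"
    and lipschitz: "\<And>y \<xi>. norm (gradF (y + \<xi>) - gradF y) \<le> L * norm \<xi>"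
    and sigma: "\<sigma> > 0"
    and unit: "norm \<xi> = 1"
  shows "\<bar>smoothed_dir_deriv F \<sigma> y \<xi> - gradF y \<bullet> \<xi>\<bar> \<le> L * \<sigma>"
proof -
  let ?s = std_normal_density
  define c where "c = gradF y \<bullet> \<xi>"
  define R where "R v = F (y + (\<sigma> * v) *\<^sub>R \<xi>) - F y - \<sigma> * v * c" for v
  have R_bound: "\<bar>R v\<bar> \<le> L / 2 * \<sigma>\<^sup>2 * v\<^sup>2" for v
    using lipschitz_gradient_taylor_bound[OF grad lipschitz, of y "(\<sigma> * v) *\<^sub>R \<xi>"] unit
    unfolding R_def c_def by (simp add: power_mult_distrib mult.assoc)
  have "continuous_on UNIV F"
    by (intro continuous_at_imp_continuous_on ballI has_derivative_continuous[OF grad])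
  then have "continuous_on UNIV (\<lambda>v. F (y + (\<sigma> * v) *\<^sub>R \<xi>))"
    by (rule continuous_on_compose2) (auto intro!: continuous_intros)
  then have "continuous_on UNIV R"
    unfolding R_def by (intro continuous_intros)
  then have R_meas: "R \<in> borel_measurable lborel"
    using borel_measurable_continuous_onI by simp
  note R_int = std_normal_moment_bound_quadratic(1)[OF R_meas R_bound]
  note R_integral = std_normal_moment_bound_quadratic(2)[OF R_meas R_bound]
  have decompose: "(\<lambda>v. ?s v * (F (y + (\<sigma> * v) *\<^sub>R \<xi>) * v))
      = (\<lambda>v. F y * (?s v * v) + \<sigma> * c * (?s v * v\<^sup>2) + ?s v * (R v * v))"
    by (simp add: R_def algebra_simps power2_eq_square)
  have int1: "integrable lborel (\<lambda>v. ?s v * v)"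
    using integrable_std_normal_moment[of 1] by simp
  have int2: "integrable lborel (\<lambda>v. ?s v * v\<^sup>2)"
    by (rule integrable_std_normal_moment)
  have "\<sigma> * smoothed_dir_deriv F \<sigma> y \<xi> = \<sigma> * c + (LINT v|lborel. ?s v * (R v * v))"
    using sigma integral_std_normal_moment_odd[of 0] integral_std_normal_moment_even[of 1]
    unfolding smoothed_dir_deriv_def decompose
    by (simp add: Bochner_Integration.integral_add int1 int2 R_int)
  then have "(LINT v|lborel. ?s v * (R v * v)) = \<sigma> * (smoothed_dir_deriv F \<sigma> y \<xi> - c)"
    by (simp add: right_diff_distrib)
  then have "\<bar>LINT v|lborel. ?s v * (R v * v)\<bar> = \<sigma> * \<bar>smoothed_dir_deriv F \<sigma> y \<xi> - c\<bar>"
    using sigma by (simp add: abs_mult)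
  then have "\<sigma> * \<bar>smoothed_dir_deriv F \<sigma> y \<xi> - c\<bar> \<le> \<sigma> * (L * \<sigma>)"
    using R_integral by (simp add: power2_eq_square mult_ac)
  then show ?thesis
    unfolding c_def by (simp add: mult_le_cancel_left_pos[OF sigma])
qed

lemma norm_gradient_sq_le_suboptimality:
  fixes F :: "'a::real_inner \<Rightarrow> real"
  assumes grad: "\<And>y. (F has_derivative (\<lambda>h. gradF y \<bullet> h)) (at y)"
    and lipschitz: "\<And>y \<xi>. norm (gradF (y + \<xi>) - gradF y) \<le> L * norm \<xi>"
    and L_pos: "L > 0"
    and minimizer: "\<And>y. F xstar \<le> F y"
  shows "(norm (gradF y))\<^sup>2 \<le> 2 * L * (F y - F xstar)"
proof -
  let ?h = "(- (1 / L)) *\<^sub>R gradF y"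
  have "F xstar \<le> F (y + ?h)" by (rule minimizer)
  also have "\<dots> \<le> F y + gradF y \<bullet> ?h + L / 2 * (norm ?h)\<^sup>2"
    by (rule lipschitz_gradient_upper_bound[OF grad lipschitz])
  also have "\<dots> = F y - (norm (gradF y))\<^sup>2 / (2 * L)"
    using L_pos by (simp add: power2_norm_eq_inner[symmetric] power_mult_distrib power2_eq_square field_simps)
  finally show ?thesis using L_pos by (simp add: field_simps)
qed

lemma suboptimality_le_dist_sq:
  fixes F :: "'a::real_inner \<Rightarrow> real"
  assumes grad: "\<And>y. (F has_derivative (\<lambda>h. gradF y \<bullet> h)) (at y)"
    and lipschitz: "\<And>y \<xi>. norm (gradF (y + \<xi>) - gradF y) \<le> L * norm \<xi>"
    and L_pos: "L > 0"
    and minimizer: "\<And>y. F xstar \<le> F y"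
  shows "F y - F xstar \<le> L / 2 * (norm (y - xstar))\<^sup>2"
proof -
  have "gradF xstar = 0"
    using norm_gradient_sq_le_suboptimality[OF grad lipschitz L_pos minimizer, of xstar] by simp
  then show ?thesis
    using lipschitz_gradient_upper_bound[OF grad lipschitz, of xstar "y - xstar"] by simp
qed

lemma strong_convexity_le_lipschitz:
  fixes F :: "'a::euclidean_space \<Rightarrow> real"
  assumes grad: "\<And>y. (F has_derivative (\<lambda>h. gradF y \<bullet> h)) (at y)"
    and lipschitz: "\<And>y \<xi>. norm (gradF (y + \<xi>) - gradF y) \<le> L * norm \<xi>"
    and strongly_convex: "\<And>y \<xi>. F (y + \<xi>) \<ge> F y + gradF y \<bullet> \<xi> + \<tau> / 2 * (norm \<xi>)\<^sup>2"
  shows "\<tau> \<le> L"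
proof -
  obtain b :: 'a where "b \<in> Basis" using nonempty_Basis by blast
  then have "norm b = 1" by simp
  then show ?thesis
    using strongly_convex[of 0 b] lipschitz_gradient_upper_bound[OF grad lipschitz, of 0 b] by simp
qed

lemma inexact_gradient_step:
  fixes F :: "'a::real_inner \<Rightarrow> real"
  assumes grad: "\<And>y. (F has_derivative (\<lambda>h. gradF y \<bullet> h)) (at y)"
    and lipschitz: "\<And>y \<xi>. norm (gradF (y + \<xi>) - gradF y) \<le> L * norm \<xi>"
    and strongly_convex: "\<And>y \<xi>. F (y + \<xi>) \<ge> F y + gradF y \<bullet> \<xi> + \<tau> / 2 * (norm \<xi>)\<^sup>2"
    and minimizer: "\<And>y. F xstar \<le> F y"
    and L_pos: "L > 0" and tau_pos: "\<tau> > 0"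
    and step_pos: "\<eta> > 0" and step_le: "\<eta> \<le> 1 / (2 * L)"
  shows "(norm (z - \<eta> *\<^sub>R g - xstar))\<^sup>2
    \<le> (1 - \<eta> * \<tau> / 2) * (norm (z - xstar))\<^sup>2 + (2 * \<eta> / \<tau> + 2 * \<eta>\<^sup>2) * (norm (g - gradF z))\<^sup>2"
proof -
  define u where "u = z - xstar"
  define e where "e = g - gradF z"
  define D where "D = F z - F xstar"
  have D_nonneg: "D \<ge> 0" unfolding D_def using minimizer by simp
  have expand: "(norm (z - \<eta> *\<^sub>R g - xstar))\<^sup>2 = (norm u)\<^sup>2 - 2 * \<eta> * (g \<bullet> u) + \<eta>\<^sup>2 * (norm g)\<^sup>2"
    unfolding u_def power2_norm_eq_inner
    by (simp add: inner_diff_left inner_diff_right inner_commute power2_eq_square algebra_simps)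
  have "F xstar \<ge> F z - gradF z \<bullet> u + \<tau> / 2 * (norm u)\<^sup>2"
    using strongly_convex[of z "- u"] unfolding u_def
    by (simp add: norm_minus_commute inner_diff_right)
  moreover have "e \<bullet> u \<ge> - (norm e * norm u)"
    using Cauchy_Schwarz_ineq2[of e u] by linarith
  ultimately have "g \<bullet> u \<ge> D + \<tau> / 2 * (norm u)\<^sup>2 - norm e * norm u"
    unfolding D_def e_def by (simp add: inner_diff_left)
  then have descent: "\<eta> * (g \<bullet> u) \<ge> \<eta> * D + \<eta> * \<tau> / 2 * (norm u)\<^sup>2 - \<eta> * (norm e * norm u)"
    using mult_left_mono[of _ _ \<eta>] step_pos by (fastforce simp: algebra_simps)
  have "0 \<le> (\<tau> / 2 * norm u - norm e)\<^sup>2" by simp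
  then have "2 * (norm e * norm u) \<le> \<tau> / 2 * (norm u)\<^sup>2 + 2 / \<tau> * (norm e)\<^sup>2"
    using tau_pos by (simp add: power2_eq_square field_simps)
  then have young: "2 * \<eta> * (norm e * norm u) \<le> \<eta> * \<tau> / 2 * (norm u)\<^sup>2 + 2 * \<eta> / \<tau> * (norm e)\<^sup>2"
    using mult_left_mono[of _ _ \<eta>] step_pos by (fastforce simp: algebra_simps)
  have "(norm g)\<^sup>2 \<le> 2 * (norm (gradF z))\<^sup>2 + 2 * (norm e)\<^sup>2"
    using norm_triangle_ineq[of "gradF z" e] zero_le_power2[of "norm (gradF z) - norm e"]
      power_mono[of "norm g" "norm (gradF z) + norm e" 2]
    unfolding e_def by (simp add: power2_eq_square algebra_simps)
  also have "\<dots> \<le> 4 * L * D + 2 * (norm e)\<^sup>2"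
    using norm_gradient_sq_le_suboptimality[OF grad lipschitz L_pos minimizer, of z]
    unfolding D_def by simp
  finally have "\<eta>\<^sup>2 * (norm g)\<^sup>2 \<le> \<eta>\<^sup>2 * (4 * L * D + 2 * (norm e)\<^sup>2)"
    by (rule mult_left_mono) simp
  then have grad_sq: "\<eta>\<^sup>2 * (norm g)\<^sup>2 \<le> 4 * L * \<eta>\<^sup>2 * D + 2 * \<eta>\<^sup>2 * (norm e)\<^sup>2"
    by (simp add: algebra_simps)
  have "4 * L * \<eta>\<^sup>2 * D = 2 * \<eta> * D * (2 * L * \<eta>)" by (simp add: power2_eq_square)
  also have "\<dots> \<le> 2 * \<eta> * D"
    using step_le step_pos D_nonneg L_pos by (intro mult_left_le) (auto simp: field_simps)
  finally have "4 * L * \<eta>\<^sup>2 * D \<le> 2 * \<eta> * D" .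
  then show ?thesis
    unfolding expand u_def[symmetric] e_def[symmetric] using descent young grad_sq
    by (simp add: algebra_simps)
qed

lemma affine_recurrence_bound:
  fixes a :: "nat \<Rightarrow> real"
  assumes rho_nonneg: "0 \<le> \<rho>"
    and step: "\<And>n. a (Suc n) \<le> \<rho> * a n + (1 - \<rho>) * \<delta>"
  shows "a n \<le> \<delta> + \<rho> ^ n * (a 0 - \<delta>)"
proof (induction n)
  case (Suc n)
  have "a (Suc n) \<le> \<rho> * (\<delta> + \<rho> ^ n * (a 0 - \<delta>)) + (1 - \<rho>) * \<delta>"
    using step[of n] mult_left_mono[OF Suc rho_nonneg] by linarith
  then show ?case by (simp add: algebra_simps)
qed simp

lemma inexact_gradient_descent_dist_sq_bound:
  fixes F :: "'a::euclidean_space \<Rightarrow> real"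
  assumes grad: "\<And>y. (F has_derivative (\<lambda>h. gradF y \<bullet> h)) (at y)"
    and lipschitz: "\<And>y \<xi>. norm (gradF (y + \<xi>) - gradF y) \<le> L * norm \<xi>"
    and strongly_convex: "\<And>y \<xi>. F (y + \<xi>) \<ge> F y + gradF y \<bullet> \<xi> + \<tau> / 2 * (norm \<xi>)\<^sup>2"
    and minimizer: "\<And>y. F xstar \<le> F y"
    and L_pos: "L > 0" and tau_pos: "\<tau> > 0"
    and step_pos: "\<eta> > 0" and step_le: "\<eta> \<le> 1 / (2 * L)"
    and iter: "\<And>t. x (Suc t) = x t - \<eta> *\<^sub>R g t"
    and error: "\<And>t. (norm (g t - gradF (x t)))\<^sup>2 \<le> E"
    and delta: "(2 * \<eta> / \<tau> + 2 * \<eta>\<^sup>2) * E \<le> \<eta> * \<tau> / 2 * \<delta>"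
  shows "(norm (x t - xstar))\<^sup>2 \<le> \<delta> + (1 - \<eta> * \<tau> / 2) ^ t * ((norm (x 0 - xstar))\<^sup>2 - \<delta>)"
proof (rule affine_recurrence_bound)
  have "\<eta> * \<tau> \<le> 1 / (2 * L) * L"
    using strong_convexity_le_lipschitz[OF grad lipschitz strongly_convex] step_le step_pos tau_pos
    by (intro mult_mono) auto
  then show "0 \<le> 1 - \<eta> * \<tau> / 2" using L_pos by simp
  fix n
  have "(2 * \<eta> / \<tau> + 2 * \<eta>\<^sup>2) * (norm (g n - gradF (x n)))\<^sup>2 \<le> (2 * \<eta> / \<tau> + 2 * \<eta>\<^sup>2) * E"
    using error tau_pos step_pos by (intro mult_left_mono) auto
  then show "(norm (x (Suc n) - xstar))\<^sup>2
      \<le> (1 - \<eta> * \<tau> / 2) * (norm (x n - xstar))\<^sup>2 + (1 - (1 - \<eta> * \<tau> / 2)) * \<delta>"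
    using inexact_gradient_step[OF grad lipschitz strongly_convex minimizer L_pos tau_pos step_pos step_le,
        of "x n" "g n"] delta
    unfolding iter by simp
qed

lemma dgs_grad_error_bound:
  fixes F :: "'a::euclidean_space \<Rightarrow> real" and \<sigma> L Q :: real
  assumes grad: "\<And>y. (F has_derivative (\<lambda>h. gradF y \<bullet> h)) (at y)"
    and lipschitz: "\<And>y \<xi>. norm (gradF (y + \<xi>) - gradF y) \<le> L * norm \<xi>"
    and sigma: "\<sigma> > 0"
    and basis: "orthonormal_basis \<Xi>"
    and quadrature: "\<And>\<xi>. norm \<xi> = 1 \<Longrightarrow> \<bar>gh_dir_deriv F M \<sigma> y \<xi> - smoothed_dir_deriv F \<sigma> y \<xi>\<bar> \<le> Q"
  shows "(norm (dgs_grad F M \<sigma> \<Xi> y - gradF y))\<^sup>2 \<le> real DIM('a) * (L * \<sigma> + Q)\<^sup>2"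
proof -
  let ?e = "\<lambda>i. gh_dir_deriv F M \<sigma> y (\<Xi> i) - gradF y \<bullet> \<Xi> i"
  have "dgs_grad F M \<sigma> \<Xi> y - gradF y = (\<Sum>i<DIM('a). ?e i *\<^sub>R \<Xi> i)"
    by (subst (2) orthonormal_basis_expansion[OF basis])
      (simp add: dgs_grad_def sum_subtractf scaleR_diff_left)
  then have "(norm (dgs_grad F M \<sigma> \<Xi> y - gradF y))\<^sup>2 = (\<Sum>i<DIM('a). (?e i)\<^sup>2)"
    by (simp add: norm_sum_orthonormal_basis_squared[OF basis])
  also have "\<dots> \<le> (\<Sum>i<DIM('a). (L * \<sigma> + Q)\<^sup>2)"
  proof (rule sum_mono)
    fix i assume "i \<in> {..<DIM('a)}"
    then have "\<Xi> i \<bullet> \<Xi> i = 1" using basis unfolding orthonormal_basis_def by simp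
    then have unit: "norm (\<Xi> i) = 1" by (simp add: norm_eq_sqrt_inner)
    have "\<bar>?e i\<bar> \<le> L * \<sigma> + Q"
      using quadrature[OF unit] smoothed_dir_deriv_approx[OF grad lipschitz sigma unit, of y] by linarith
    then show "(?e i)\<^sup>2 \<le> (L * \<sigma> + Q)\<^sup>2"
      using power_mono[of "\<bar>?e i\<bar>" _ 2] by simp
  qed
  finally show ?thesis by simp
qed

lemma gauss_hermite_error_bound_sq:
  fixes \<sigma> C :: real
  assumes "0 < \<sigma>" "\<sigma> < 1" "M \<ge> 1"
  shows "(C * (fact M * sqrt pi / (2 ^ M * fact (2 * M))) * \<sigma> ^ (2 * M - 1))\<^sup>2
    \<le> C\<^sup>2 * (fact M)\<^sup>2 * pi / (4 ^ M * (fact (2 * M))\<^sup>2) * \<sigma>\<^sup>2"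
proof -
  have "(\<sigma> ^ (2 * M - 1))\<^sup>2 = \<sigma> ^ (2 * (2 * M - 1))" by (simp add: power_mult[symmetric] mult.commute)
  also have "\<dots> \<le> \<sigma>\<^sup>2" using assms by (intro power_decreasing) auto
  finally have "(\<sigma> ^ (2 * M - 1))\<^sup>2 \<le> \<sigma>\<^sup>2" .
  then have "C\<^sup>2 * (fact M)\<^sup>2 * pi / (4 ^ M * (fact (2 * M))\<^sup>2) * (\<sigma> ^ (2 * M - 1))\<^sup>2
      \<le> C\<^sup>2 * (fact M)\<^sup>2 * pi / (4 ^ M * (fact (2 * M))\<^sup>2) * \<sigma>\<^sup>2"
    by (rule mult_left_mono) simp
  moreover have "((2::real) ^ M)\<^sup>2 = 4 ^ M" by (simp add: power_mult_distrib[symmetric] power2_eq_square)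
  ultimately show ?thesis
    by (simp add: power_mult_distrib power_divide)
qed

lemma dgs_error_within_delta:
  fixes L \<tau> \<sigma> Q X d :: real
  assumes L_pos: "L > 0" and tau_pos: "\<tau> > 0" and tau_le: "\<tau> \<le> 8 * L"
    and d_nonneg: "d \<ge> 0" and Q_bound: "d * Q\<^sup>2 \<le> X * \<sigma>\<^sup>2"
  shows "(2 * (1 / (8 * L)) / \<tau> + 2 * (1 / (8 * L))\<^sup>2) * (d * (L * \<sigma> + Q)\<^sup>2)
    \<le> 1 / (8 * L) * \<tau> / 2 * ((128 / \<tau>\<^sup>2 + 16 / (\<tau> * L)) * L\<^sup>2 * d * \<sigma>\<^sup>2
                              + (8 / \<tau>\<^sup>2 + 1 / (2 * \<tau> * L)) * X * \<sigma>\<^sup>2)"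
proof -
  define K where "K = 2 * (1 / (8 * L)) / \<tau> + 2 * (1 / (8 * L))\<^sup>2"
  have K_eq: "K = 1 / (4 * L * \<tau>) + 1 / (32 * L\<^sup>2)"
    unfolding K_def by (simp add: power2_eq_square field_simps)
  have "0 \<le> (L * \<sigma> - Q / 2)\<^sup>2" by simp
  then have "(L * \<sigma> + Q)\<^sup>2 \<le> 3 * L\<^sup>2 * \<sigma>\<^sup>2 + 3 / 2 * Q\<^sup>2"
    by (simp add: power2_eq_square algebra_simps)
  moreover have "K \<ge> 0" unfolding K_eq using L_pos tau_pos by simp
  ultimately have "K * (d * (L * \<sigma> + Q)\<^sup>2) \<le> K * (d * (3 * L\<^sup>2 * \<sigma>\<^sup>2 + 3 / 2 * Q\<^sup>2))"
    using d_nonneg by (intro mult_left_mono) auto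
  also have "\<dots> = K * (3 * L\<^sup>2) * (d * \<sigma>\<^sup>2) + K * (3 / 2) * (d * Q\<^sup>2)"
    by (simp add: algebra_simps)
  also have "\<dots> \<le> \<tau> / (16 * L) * ((128 / \<tau>\<^sup>2 + 16 / (\<tau> * L)) * L\<^sup>2) * (d * \<sigma>\<^sup>2)
      + \<tau> / (16 * L) * (8 / \<tau>\<^sup>2 + 1 / (2 * \<tau> * L)) * (X * \<sigma>\<^sup>2)"
  proof (intro add_mono mult_right_mono)
    show "K * (3 * L\<^sup>2) \<le> \<tau> / (16 * L) * ((128 / \<tau>\<^sup>2 + 16 / (\<tau> * L)) * L\<^sup>2)"
      unfolding K_eq using L_pos tau_pos by (simp add: field_simps power2_eq_square)
    show "K * (3 / 2) * (d * Q\<^sup>2) \<le> \<tau> / (16 * L) * (8 / \<tau>\<^sup>2 + 1 / (2 * \<tau> * L)) * (X * \<sigma>\<^sup>2)"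
    proof (rule mult_mono[OF _ Q_bound])
      show "K * (3 / 2) \<le> \<tau> / (16 * L) * (8 / \<tau>\<^sup>2 + 1 / (2 * \<tau> * L))"
        unfolding K_eq using L_pos tau_pos tau_le by (simp add: field_simps power2_eq_square)
    qed (use d_nonneg L_pos tau_pos in simp_all)
  qed (use d_nonneg in simp)
  also have "\<dots> = 1 / (8 * L) * \<tau> / 2 * ((128 / \<tau>\<^sup>2 + 16 / (\<tau> * L)) * L\<^sup>2 * d * \<sigma>\<^sup>2
                              + (8 / \<tau>\<^sup>2 + 1 / (2 * \<tau> * L)) * X * \<sigma>\<^sup>2)"
    by (simp add: algebra_simps)
  finally show ?thesis
    unfolding K_def .
qed

theorem proposition2:
  fixes F :: "'a::euclidean_space \<Rightarrow> real"
    and gradF :: "'a \<Rightarrow> 'a"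
    and \<tau> L \<sigma> C :: real
    and M :: nat
    and xstar :: "'a"
    and x :: "nat \<Rightarrow> 'a"
    and \<Xi> :: "nat \<Rightarrow> nat \<Rightarrow> 'a"
  assumes grad: "\<And>y. (F has_derivative (\<lambda>h. gradF y \<bullet> h)) (at y)"
    and L_pos: "L > 0"
    and lipschitz: "\<And>y \<xi>. norm (gradF (y + \<xi>) - gradF y) \<le> L * norm \<xi>"
    and tau_pos: "\<tau> > 0"
    and strongly_convex:
      "\<And>y \<xi>. F (y + \<xi>) \<ge> F y + gradF y \<bullet> \<xi> + \<tau> / 2 * (norm \<xi>)\<^sup>2"
    and minimizer: "\<And>y. F xstar \<le> F y"
    and M_ge: "M \<ge> 1"
    and sigma: "0 < \<sigma>" "\<sigma> < 1"
    and C_pos: "C > 0"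
    and quad_err: "\<And>y \<xi>. norm \<xi> = 1 \<Longrightarrow>
        \<bar>gh_dir_deriv F M \<sigma> y \<xi> - smoothed_dir_deriv F \<sigma> y \<xi>\<bar>
          \<le> C * (fact M * sqrt pi / (2 ^ M * fact (2 * M))) * \<sigma> ^ (2 * M - 1)"
    and bases: "\<And>t. orthonormal_basis (\<Xi> t)"
    and iter: "\<And>t. x (Suc t) = x t - (1 / (8 * L)) *\<^sub>R dgs_grad F M \<sigma> (\<Xi> t) (x t)"
  shows "F (x t) - F xstar \<le>
    (let d = real DIM('a);
         \<delta> = (128 / \<tau>\<^sup>2 + 16 / (\<tau> * L)) * L\<^sup>2 * d * \<sigma>\<^sup>2
             + (8 / \<tau>\<^sup>2 + 1 / (2 * \<tau> * L))
               * (C\<^sup>2 * (fact M)\<^sup>2 * pi * d / (4 ^ M * (fact (2 * M))\<^sup>2)) * \<sigma>\<^sup>2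
     in 1 / 2 * L * (\<delta> + (1 - \<tau> / (16 * L)) ^ t * ((norm (x 0 - xstar))\<^sup>2 - \<delta>)))"
proof -
  define d where "d = real DIM('a)"
  define Q where "Q = C * (fact M * sqrt pi / (2 ^ M * fact (2 * M))) * \<sigma> ^ (2 * M - 1)"
  define X where "X = C\<^sup>2 * (fact M)\<^sup>2 * pi * d / (4 ^ M * (fact (2 * M))\<^sup>2)"
  define \<delta> where "\<delta> = (128 / \<tau>\<^sup>2 + 16 / (\<tau> * L)) * L\<^sup>2 * d * \<sigma>\<^sup>2
      + (8 / \<tau>\<^sup>2 + 1 / (2 * \<tau> * L)) * X * \<sigma>\<^sup>2"
  have error: "(norm (dgs_grad F M \<sigma> (\<Xi> t) (x t) - gradF (x t)))\<^sup>2 \<le> d * (L * \<sigma> + Q)\<^sup>2" for t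
    unfolding d_def Q_def by (rule dgs_grad_error_bound[OF grad lipschitz sigma(1) bases quad_err])
  have "d * Q\<^sup>2 \<le> X * \<sigma>\<^sup>2"
    using mult_left_mono[OF gauss_hermite_error_bound_sq[OF sigma M_ge, of C], of d]
    unfolding d_def Q_def X_def by (simp add: mult_ac)
  moreover have "\<tau> \<le> 8 * L"
    using strong_convexity_le_lipschitz[OF grad lipschitz strongly_convex] L_pos by simp
  ultimately have coefficient: "(2 * (1 / (8 * L)) / \<tau> + 2 * (1 / (8 * L))\<^sup>2) * (d * (L * \<sigma> + Q)\<^sup>2)
      \<le> 1 / (8 * L) * \<tau> / 2 * \<delta>"
    unfolding \<delta>_def using L_pos tau_pos d_def by (intro dgs_error_within_delta) auto
  have step_pos: "1 / (8 * L) > 0" and step_le: "1 / (8 * L) \<le> 1 / (2 * L)"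
    using L_pos by (simp_all add: frac_le)
  have "(norm (x t - xstar))\<^sup>2 \<le> \<delta> + (1 - 1 / (8 * L) * \<tau> / 2) ^ t * ((norm (x 0 - xstar))\<^sup>2 - \<delta>)"
    by (rule inexact_gradient_descent_dist_sq_bound[where g = "\<lambda>t. dgs_grad F M \<sigma> (\<Xi> t) (x t)",
          OF grad lipschitz strongly_convex minimizer L_pos tau_pos step_pos step_le iter error coefficient])
  then have "(norm (x t - xstar))\<^sup>2 \<le> \<delta> + (1 - \<tau> / (16 * L)) ^ t * ((norm (x 0 - xstar))\<^sup>2 - \<delta>)"
    by (simp add: mult.commute)
  then have "L / 2 * (norm (x t - xstar))\<^sup>2
      \<le> L / 2 * (\<delta> + (1 - \<tau> / (16 * L)) ^ t * ((norm (x 0 - xstar))\<^sup>2 - \<delta>))"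
    using L_pos by (simp add: mult_left_mono)
  with suboptimality_le_dist_sq[OF grad lipschitz L_pos minimizer, of "x t"]
  show ?thesis
    unfolding Let_def d_def[symmetric] X_def[symmetric] \<delta>_def[symmetric] by simp
qed

end
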